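(* Let $A$ be a nontrivial closed class of decision tables from $\mathcal M_2^\infty$ and $\psi$ a bounded complexity measure. If $\mathcal H^\infty_{\psi,A}$ is everywhere defined, then for every $n\in\omega$ the value $Z_{\psi,A}(n)$ is defined and $\mathcal H^\infty_{\psi,A}(3n)\ge\sqrt{2Z_{\psi,A}(n)}-3$.
   Context: Notation: $\omega=\{0,1,2,\dots\}$; $\mathcal P(\omega)$ is the set of nonempty finite subsets of $\omega$; $E_2=\{0,1\}$. $P=\{f_i:i\in\omega\}$ is a set of attributes, $f_i\neq f_j$ for $i\ne j$. Decision tables: $\mathcal M_2^\infty$ is the set of rectangular tables filled with numbers from $E_2$, whose columns are labeled with pairwise different attributes from $P$, whose rows are pairwise different, and each row of which is labeled with a set from $\mathcal P(\omega)$ (its set of decisions). The empty table (no rows) is denoted $\Lambda$ and belongs to $\mathcal M_2^\infty$. For $T\in\mathcal M_2^\infty$: $\Pi(T)$ is the intersection of the decision sets of all rows (common decisions); $\mathrm{At}(T)$ is the set of attributes labeling columns; $N(T)$ is the number of rows. For nonempty $T$ and a word $\alpha=(f_{i_1},\delta_1)\cdots(f_{i_m},\delta_m)$ with $f_{i_j}\in\mathrm{At}(T)$, $\delta_j\in E_2$, $T\alpha$ is the subtable of $T$ consisting of the rows having value $\delta_j$ in the column $f_{i_j}$ for all $j$; $T\lambda=T$ for the empty word $\lambda$. Operations: for $D\subseteq\mathrm{At}(T)$, $I(D,T)$ is obtained from $T$ by deleting the columns labeled with attributes from $D$ and, in each group of rows coinciding on the remaining columns, keeping only the first row; $I(\mathrm{At}(T),T)=\Lambda$.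 For $\nu:E_2^{|\mathrm{At}(T)|}\to\mathcal P(\omega)$, $J(\nu,T)$ is obtained by replacing the decision set of each row $\bar\delta$ by $\nu(\bar\delta)$. $[T]=\{J(\nu,I(D,T)):D\subseteq\mathrm{At}(T),\ \nu:E_2^{|\mathrm{At}(T)\setminus D|}\to\mathcal P(\omega)\}$; for nonempty $A\subseteq\mathcal M_2^\infty$, $[A]=\bigcup_{T\in A}[T]$. $A$ is a closed class if $[A]=A$; nontrivial if it contains a nonempty table. Decision trees: a $2$-decision tree is a finite directed rooted tree with at least two nodes in which the root and the edges leaving the root are unlabeled, each terminal node is labeled with a decision from $\omega$, and each other node is labeled with an attribute from $P$, each edge leaving such a node being labeled with a number from $E_2$. $\mathrm{At}(\Gamma)$ is the set of attributes labeling nodes of $\Gamma$. For a complete path $\tau=v_1,d_1,\dots,v_m,d_m,v_{m+1}$ (from the root to a terminal node), $\pi(\tau)=\lambda$ if $m=1$, and otherwise $\pi(\tau)=(f_{i_2},\delta_2)\cdots(f_{i_m},\delta_m)$ where $v_j$ is labeled $f_{i_j}$ and $d_j$ is labeled $\delta_j$; $T(\tau)=T\pi(\tau)$. For $T\ne\Lambda$, a nondeterministic decision tree for $T$ is a $2$-decision tree $\Gamma$ with $\mathrm{At}(\Gamma)\subseteq\mathrm{At}(T)$ such that every row of $T$ belongs to $T(\tau)$ for some complete path $\tau$, and for every complete path $\tau$ either $T(\tau)=\Lambda$ or the decision at the terminal node of $\tau$ belongs to $\Pi(T(\tau))$. A deterministic decision tree for $T$ is a nondeterministic decision tree for $T$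 in which, additionally, exactly one edge leaves the root and the edges leaving any node that is neither the root nor terminal are labeled with pairwise different numbers. Complexity measures: a partially bounded complexity measure is a function $\psi:P^*\to\omega$ on finite words over $P$ such that for all words $\alpha_1,\alpha_2$: $\psi(\alpha_1)=0$ iff $\alpha_1=\lambda$; $\psi(\alpha_1)$ is invariant under permutation of letters; $\psi(\alpha_1)\le\psi(\alpha_1\alpha_2)$; $\psi(\alpha_1\alpha_2)\le\psi(\alpha_1)+\psi(\alpha_2)$. It is bounded if in addition $\psi(\alpha)\ge|\alpha|$ for all $\alpha$. $\psi$ is extended to words $(f_{i_1},\delta_1)\cdots(f_{i_m},\delta_m)$ by $\psi(f_{i_1}\cdots f_{i_m})$ ($\psi(\lambda)=0$). For a $2$-decision tree $\Gamma$, $\psi(\Gamma)=\max_\tau\psi(\pi(\tau))$ over complete paths. For $T\ne\Lambda$, $\psi^d(T)$ (resp. $\psi^a(T)$) is the minimum of $\psi(\Gamma)$ over deterministic (resp. nondeterministic) decision trees $\Gamma$ for $T$; $\psi^d(\Lambda)=\psi^a(\Lambda)=0$. Parameters: $m_\psi(T)=\max\{\psi(f_i):f_i\in\mathrm{At}(T)\}$, $m_\psi(\Lambda)=0$. A table $Q\in\mathcal M_2^\infty$ is complete if $N(Q)=2^{|\mathrm{At}(Q)|}$; $Z(T)$ is the maximum number of columns of a complete table in $[T]$ if such tables exist, and $0$ otherwise; $Z(\Lambda)=0$. For $n\in\omega$: $A_\psi(n)=\{T\in A:m_\psi(T)\le n\}$; $Z_{\psi,A}(n)$ is undefined if $\{Z(T):T\in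 A_\psi(n)\}$ is infinite, else its maximum; $\mathcal H^\infty_{\psi,A}(n)$ is undefined if $\{\psi^d(T):T\in A,\psi^a(T)\le n\}$ is infinite, else its maximum. *)

theory Defs
  imports Complex_Main "HOL-Library.Multiset"
begin

(* Attributes f_i are identified with their indices i :: nat.
   E_2 = {0,1} is represented by bool (False = 0, True = 1). *)

datatype tab = Tab (attrs: "nat list") (rows: "(bool list \<times> nat set) list")

definition Lambda :: tab where "Lambda = Tab [] []"

definition wf_tab :: "tab \<Rightarrow> bool" where
  "wf_tab T \<longleftrightarrow> distinct (attrs T)
     \<and> (\<forall>r\<in>set (rows T). length (fst r) = length (attrs T) \<and> finite (snd r) \<and> snd r \<noteq> {})
     \<and> distinct (map fst (rows T))
     \<and> (attrs T = [] \<longleftrightarrow> rows T = [])"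

definition M2 :: "tab set" where "M2 = {T. wf_tab T}"

definition At :: "tab \<Rightarrow> nat set" where "At T = set (attrs T)"

definition N :: "tab \<Rightarrow> nat" where "N T = length (rows T)"

definition rval :: "tab \<Rightarrow> bool list \<times> nat set \<Rightarrow> nat \<Rightarrow> bool" where
  "rval T r f = the (map_of (zip (attrs T) (fst r)) f)"

definition sub_rows :: "tab \<Rightarrow> (nat \<times> bool) list \<Rightarrow> (bool list \<times> nat set) list" where
  "sub_rows T \<alpha> = filter (\<lambda>r. \<forall>(f,\<delta>)\<in>set \<alpha>. rval T r f = \<delta>) (rows T)"

definition Pi_rows :: "(bool list \<times> nat set) list \<Rightarrow> nat set" where
  "Pi_rows rs = (\<Inter>r\<in>set rs. snd r)"

fun dedup :: "('a \<times> 'b) list \<Rightarrow> ('a \<times> 'b) list" where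
  "dedup [] = []"
| "dedup (x # xs) = x # dedup (filter (\<lambda>y. fst y \<noteq> fst x) xs)"

definition I_op :: "nat set \<Rightarrow> tab \<Rightarrow> tab" where
  "I_op D T = (if At T \<subseteq> D then Lambda else
     Tab (filter (\<lambda>f. f \<notin> D) (attrs T))
         (dedup (map (\<lambda>r. (map snd (filter (\<lambda>p. fst p \<notin> D) (zip (attrs T) (fst r))), snd r))
                     (rows T))))"

definition J_op :: "(bool list \<Rightarrow> nat set) \<Rightarrow> tab \<Rightarrow> tab" where
  "J_op \<nu> T = Tab (attrs T) (map (\<lambda>r. (fst r, \<nu> (fst r))) (rows T))"

definition cl_tab :: "tab \<Rightarrow> tab set" where
  "cl_tab T = {J_op \<nu> (I_op D T) | D \<nu>. D \<subseteq> At T \<and>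
       (\<forall>\<delta>. length \<delta> = card (At T - D) \<longrightarrow> finite (\<nu> \<delta>) \<and> \<nu> \<delta> \<noteq> {})}"

definition cl :: "tab set \<Rightarrow> tab set" where
  "cl A = (\<Union>T\<in>A. cl_tab T)"

definition closed_class :: "tab set \<Rightarrow> bool" where
  "closed_class A \<longleftrightarrow> A \<subseteq> M2 \<and> A \<noteq> {} \<and> cl A = A"

definition nontrivial :: "tab set \<Rightarrow> bool" where
  "nontrivial A \<longleftrightarrow> (\<exists>T\<in>A. T \<noteq> Lambda)"

(* 2-decision trees: the root is represented by the (nonempty) list of its children;
   Leaf d is a terminal node labelled with decision d; Node f cs is a node labelled with
   attribute f whose outgoing edges are labelled by the numbers in cs. *)
datatype dtree = Leaf nat | Node nat "(bool \<times> dtree) list"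

fun wf_node :: "dtree \<Rightarrow> bool" where
  "wf_node (Leaf d) = True"
| "wf_node (Node f cs) = (cs \<noteq> [] \<and> (\<forall>p\<in>set cs. wf_node (snd p)))"

definition wf_dtree :: "dtree list \<Rightarrow> bool" where
  "wf_dtree \<Gamma> \<longleftrightarrow> \<Gamma> \<noteq> [] \<and> (\<forall>v\<in>set \<Gamma>. wf_node v)"

fun node_atts :: "dtree \<Rightarrow> nat set" where
  "node_atts (Leaf d) = {}"
| "node_atts (Node f cs) = insert f (\<Union>p\<in>set cs. node_atts (snd p))"

definition tree_atts :: "dtree list \<Rightarrow> nat set" where
  "tree_atts \<Gamma> = (\<Union>v\<in>set \<Gamma>. node_atts v)"

fun node_paths :: "dtree \<Rightarrow> ((nat \<times> bool) list \<times> nat) list" where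
  "node_paths (Leaf d) = [([], d)]"
| "node_paths (Node f cs) =
     concat (map (\<lambda>p. map (\<lambda>wd. ((f, fst p) # fst wd, snd wd)) (node_paths (snd p))) cs)"

definition tree_paths :: "dtree list \<Rightarrow> ((nat \<times> bool) list \<times> nat) list" where
  "tree_paths \<Gamma> = concat (map node_paths \<Gamma>)"

definition nondet_tree_for :: "dtree list \<Rightarrow> tab \<Rightarrow> bool" where
  "nondet_tree_for \<Gamma> T \<longleftrightarrow> wf_dtree \<Gamma> \<and> tree_atts \<Gamma> \<subseteq> At T
     \<and> (\<forall>r\<in>set (rows T). \<exists>\<tau>\<in>set (tree_paths \<Gamma>). r \<in> set (sub_rows T (fst \<tau>)))
     \<and> (\<forall>\<tau>\<in>set (tree_paths \<Gamma>). sub_rows T (fst \<tau>) = [] \<or> snd \<tau> \<in> Pi_rows (sub_rows T (fst \<tau>)))"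

fun det_node :: "dtree \<Rightarrow> bool" where
  "det_node (Leaf d) = True"
| "det_node (Node f cs) = (distinct (map fst cs) \<and> (\<forall>p\<in>set cs. det_node (snd p)))"

definition det_tree_for :: "dtree list \<Rightarrow> tab \<Rightarrow> bool" where
  "det_tree_for \<Gamma> T \<longleftrightarrow> nondet_tree_for \<Gamma> T \<and> length \<Gamma> = 1 \<and> (\<forall>v\<in>set \<Gamma>. det_node v)"

definition pb_measure :: "(nat list \<Rightarrow> nat) \<Rightarrow> bool" where
  "pb_measure \<psi> \<longleftrightarrow>
     (\<forall>a. \<psi> a = 0 \<longleftrightarrow> a = [])
   \<and> (\<forall>a b. mset a = mset b \<longrightarrow> \<psi> a = \<psi> b)
   \<and> (\<forall>a b. \<psi> a \<le> \<psi> (a @ b))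
   \<and> (\<forall>a b. \<psi> (a @ b) \<le> \<psi> a + \<psi> b)"

definition bounded_measure :: "(nat list \<Rightarrow> nat) \<Rightarrow> bool" where
  "bounded_measure \<psi> \<longleftrightarrow> pb_measure \<psi> \<and> (\<forall>a. length a \<le> \<psi> a)"

definition psi_tree :: "(nat list \<Rightarrow> nat) \<Rightarrow> dtree list \<Rightarrow> nat" where
  "psi_tree \<psi> \<Gamma> = Max ((\<lambda>\<tau>. \<psi> (map fst (fst \<tau>))) ` set (tree_paths \<Gamma>))"

definition psi_d :: "(nat list \<Rightarrow> nat) \<Rightarrow> tab \<Rightarrow> nat" where
  "psi_d \<psi> T = (if T = Lambda then 0 else LEAST k. \<exists>\<Gamma>. det_tree_for \<Gamma> T \<and> psi_tree \<psi> \<Gamma> = k)"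

definition psi_a :: "(nat list \<Rightarrow> nat) \<Rightarrow> tab \<Rightarrow> nat" where
  "psi_a \<psi> T = (if T = Lambda then 0 else LEAST k. \<exists>\<Gamma>. nondet_tree_for \<Gamma> T \<and> psi_tree \<psi> \<Gamma> = k)"

definition m_psi :: "(nat list \<Rightarrow> nat) \<Rightarrow> tab \<Rightarrow> nat" where
  "m_psi \<psi> T = (if At T = {} then 0 else Max ((\<lambda>f. \<psi> [f]) ` At T))"

definition complete_tab :: "tab \<Rightarrow> bool" where
  "complete_tab Q \<longleftrightarrow> N Q = 2 ^ card (At Q)"

definition Z :: "tab \<Rightarrow> nat" where
  "Z T = (if T = Lambda \<or> \<not> (\<exists>Q\<in>cl_tab T. complete_tab Q) then 0
          else Max {card (At Q) | Q. Q \<in> cl_tab T \<and> complete_tab Q})"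

definition A_psi :: "(nat list \<Rightarrow> nat) \<Rightarrow> tab set \<Rightarrow> nat \<Rightarrow> tab set" where
  "A_psi \<psi> A n = {T\<in>A. m_psi \<psi> T \<le> n}"

(* None = undefined *)
definition Z_psiA :: "(nat list \<Rightarrow> nat) \<Rightarrow> tab set \<Rightarrow> nat \<Rightarrow> nat option" where
  "Z_psiA \<psi> A n = (let S = Z ` A_psi \<psi> A n in if finite S then Some (Max S) else None)"

definition H_psiA :: "(nat list \<Rightarrow> nat) \<Rightarrow> tab set \<Rightarrow> nat \<Rightarrow> nat option" where
  "H_psiA \<psi> A n = (let S = {psi_d \<psi> T | T. T \<in> A \<and> psi_a \<psi> T \<le> n} in
       if finite S then Some (Max S) else None)"

end

theory Submission
  imports Defs
begin

text \<open>Let \<open>Q \<in> [T]\<close> be a complete table with \<open>k = Z T\<close> columns and choose \<open>t\<close> with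
  \<open>t (t + 1) \<le> 2 k < (t + 1) (t + 2)\<close>. Identify \<open>t (t + 1) / 2\<close> of the columns with the nodes of a
  pyramid with \<open>t\<close> rows and relabel every row of \<open>Q\<close> by the set of clauses of the (unsatisfiable)
  pyramid formula that it falsifies; the result lies in \<open>A\<close>. Each clause mentions at most three
  attributes, so guessing a falsified clause is a nondeterministic tree of complexity at most \<open>3 n\<close>.
  A deterministic tree, however, must make \<open>t\<close> queries along some path: an adversary keeps a
  monotone path from the apex whose nodes are answered \<open>0\<close>, answers \<open>1\<close> whenever the path can be
  rerouted around the queried node, and otherwise pushes the path down to that node, the skipped
  rows being paid for by nodes queried earlier. Since \<open>\<psi>\<close> dominates length,
  \<open>\<psi>\<^sup>d \<ge> t \<ge> \<surd>(2 k) - 2\<close>.\<close>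
section \<open>An adversary for the pyramid formula\<close>

definition pyramid_node :: "nat \<Rightarrow> nat \<times> nat \<Rightarrow> bool" where
  "pyramid_node t w \<longleftrightarrow> fst w < t \<and> snd w \<le> fst w"

definition monotone_path :: "nat \<Rightarrow> (nat \<Rightarrow> nat) \<Rightarrow> bool" where
  "monotone_path t c \<longleftrightarrow> c 0 = 0 \<and> (\<forall>r. Suc r < t \<longrightarrow> c (Suc r) = c r \<or> c (Suc r) = Suc (c r))"

definition in_cone :: "nat \<Rightarrow> nat \<times> nat \<Rightarrow> nat \<times> nat \<Rightarrow> bool" where
  "in_cone t v w \<longleftrightarrow> fst v \<le> fst w \<and> fst w < t \<and> snd v \<le> snd w \<and> snd w \<le> snd v + (fst w - fst v)"

text \<open>A literal \<open>(w, b)\<close> stands for \<open>x\<^sub>w = b\<close> and a clause is the disjunction of its literals.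
  The clauses say that the apex is \<open>0\<close>, that the bottom row is \<open>1\<close>, and that a node is \<open>1\<close>
  as soon as both of its lower neighbours are; together they are unsatisfiable.\<close>

definition sink_clause :: "((nat \<times> nat) \<times> bool) list" where
  "sink_clause = [((0, 0), False)]"

definition node_clause :: "nat \<Rightarrow> nat \<times> nat \<Rightarrow> ((nat \<times> nat) \<times> bool) list" where
  "node_clause t w = (if Suc (fst w) = t then [(w, True)]
     else [(w, True), ((Suc (fst w), snd w), False), ((Suc (fst w), Suc (snd w)), False)])"

definition literal_unrefuted :: "(nat \<times> nat \<Rightarrow> bool option) \<Rightarrow> (nat \<times> nat) \<times> bool \<Rightarrow> bool" where
  "literal_unrefuted \<sigma> l \<longleftrightarrow> \<sigma> (fst l) \<noteq> Some (\<not> snd l)"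

definition no_clause_refuted :: "nat \<Rightarrow> (nat \<times> nat \<Rightarrow> bool option) \<Rightarrow> bool" where
  "no_clause_refuted t \<sigma> \<longleftrightarrow> (\<exists>l\<in>set sink_clause. literal_unrefuted \<sigma> l)
     \<and> (\<forall>w. pyramid_node t w \<longrightarrow> (\<exists>l\<in>set (node_clause t w). literal_unrefuted \<sigma> l))"

fun pyramid_evades :: "nat \<Rightarrow> nat \<Rightarrow> (nat \<times> nat \<Rightarrow> bool option) \<Rightarrow> bool" where
  "pyramid_evades t 0 \<sigma> = no_clause_refuted t \<sigma>"
| "pyramid_evades t (Suc j) \<sigma> = (no_clause_refuted t \<sigma> \<and>
     (\<forall>u. pyramid_node t u \<longrightarrow> \<sigma> u = None \<longrightarrow> (\<exists>b. pyramid_evades t j (\<sigma>(u := Some b)))))"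

lemma pyramid_evades_Suc_imp: "pyramid_evades t (Suc j) \<sigma> \<Longrightarrow> pyramid_evades t j \<sigma>"
proof (induction j arbitrary: \<sigma>)
  case (Suc j)
  then show ?case by (metis pyramid_evades.simps(2))
qed simp

lemma monotone_path_bounds:
  assumes "monotone_path t c" "r \<le> r'" "r' < t"
  shows "c r \<le> c r' \<and> c r' \<le> c r + (r' - r)"
  using assms(2,3)
proof (induction r')
  case (Suc r')
  show ?case
  proof (cases "r = Suc r'")
    case False
    with Suc have "c r \<le> c r' \<and> c r' \<le> c r + (r' - r)" "r \<le> r'" by simp_all
    moreover have "c (Suc r') = c r' \<or> c (Suc r') = Suc (c r')"
      using assms(1) Suc.prems(2) unfolding monotone_path_def by simp
    ultimately show ?thesis by auto
  qed simp
qed simp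

lemma finite_cone: "finite {w. in_cone t v w \<and> P w}"
  by (rule finite_subset[of _ "{..<t} \<times> {..snd v + t}"]) (auto simp: in_cone_def)

lemma in_cone_trans: "in_cone t u v \<Longrightarrow> in_cone t v w \<Longrightarrow> in_cone t u w"
  unfolding in_cone_def by auto


definition free_after :: "nat \<Rightarrow> (nat \<times> nat \<Rightarrow> bool option) \<Rightarrow> (nat \<Rightarrow> nat) \<Rightarrow> nat \<Rightarrow> bool" where
  "free_after t \<sigma> c l \<longleftrightarrow> (\<forall>r. l < r \<longrightarrow> r < t \<longrightarrow> \<sigma> (r, c r) = None)"

text \<open>The path \<open>c\<close> is the adversary's current route from the apex to the bottom: its first
  \<open>l + 1\<close> nodes are committed, all nodes set to \<open>0\<close> lie on this part, and the rest is unqueried.\<close>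

definition adversary_inv :: "nat \<Rightarrow> (nat \<times> nat \<Rightarrow> bool option) \<Rightarrow> (nat \<Rightarrow> nat) \<Rightarrow> nat \<Rightarrow> bool" where
  "adversary_inv t \<sigma> c l \<longleftrightarrow> monotone_path t c \<and> l < t \<and> (\<forall>r\<le>l. \<sigma> (r, c r) \<noteq> Some True)
     \<and> free_after t \<sigma> c l \<and> (\<forall>w. \<sigma> w = Some False \<longrightarrow> (\<exists>r\<le>l. w = (r, c r)))"

definition cone_load :: "nat \<Rightarrow> (nat \<times> nat \<Rightarrow> bool option) \<Rightarrow> nat \<times> nat \<Rightarrow> nat" where
  "cone_load t \<sigma> v = card {w. in_cone t v w \<and> w \<noteq> v \<and> \<sigma> w \<noteq> None}"

definition off_path :: "nat \<Rightarrow> (nat \<Rightarrow> nat) \<Rightarrow> nat \<times> nat \<Rightarrow> bool" where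
  "off_path t c w \<longleftrightarrow> \<not> (\<exists>r<t. w = (r, c r))"

lemma adversary_inv_off_path:
  assumes "adversary_inv t \<sigma> c l"
  shows "literal_unrefuted \<sigma> (w, off_path t c w)"
proof (cases "off_path t c w")
  case True
  with assms have "\<sigma> w \<noteq> Some False"
    unfolding adversary_inv_def off_path_def by (metis order.strict_trans1)
  with True show ?thesis unfolding literal_unrefuted_def by simp
next
  case False
  then obtain r where "r < t" "w = (r, c r)" unfolding off_path_def by auto
  with assms have "\<sigma> w \<noteq> Some True"
    unfolding adversary_inv_def free_after_def by (cases "r \<le> l") auto
  with False show ?thesis unfolding literal_unrefuted_def by simp
qed

text \<open>Setting the path to \<open>0\<close> and everything else to \<open>1\<close> falsifies only the clause of the last
  path node, and that node is still unqueried while \<open>l < t - 1\<close>.\<close>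

lemma adversary_inv_no_clause_refuted:
  assumes inv: "adversary_inv t \<sigma> c l" and l: "l < t - 1"
  shows "no_clause_refuted t \<sigma>"
proof -
  have mp: "monotone_path t c" and free: "free_after t \<sigma> c l"
    using inv unfolding adversary_inv_def by auto
  have unref: "literal_unrefuted \<sigma> (w, b)" if "off_path t c w = b" for w b
    using adversary_inv_off_path[OF inv, of w] that by simp
  have "\<not> off_path t c (0, 0)"
    using mp l unfolding off_path_def monotone_path_def by auto
  then have sink: "\<exists>l\<in>set sink_clause. literal_unrefuted \<sigma> l"
    using unref[of "(0, 0)" False] unfolding sink_clause_def by auto
  have "\<exists>l\<in>set (node_clause t (r, s)). literal_unrefuted \<sigma> l" if "pyramid_node t (r, s)" for r s
  proof (cases "off_path t c (r, s)")
    case True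
    then show ?thesis using unref[of "(r, s)" True] unfolding node_clause_def by simp
  next
    case False
    then have s: "s = c r" unfolding off_path_def by auto
    show ?thesis
    proof (cases "Suc r = t")
      case True
      then have "\<sigma> (r, s) = None" using free l s unfolding free_after_def by auto
      then show ?thesis using True unfolding node_clause_def literal_unrefuted_def by simp
    next
      case False
      then have "Suc r < t" using that unfolding pyramid_node_def by simp
      then have "\<not> off_path t c (Suc r, s) \<or> \<not> off_path t c (Suc r, Suc s)"
        using mp s unfolding monotone_path_def off_path_def by (metis prod.inject)
      then show ?thesis
        using False unref[of "(Suc r, s)" False] unref[of "(Suc r, Suc s)" False]
        unfolding node_clause_def by auto
    qed
  qed
  with sink show ?thesis unfolding no_clause_refuted_def by auto
qed


definition forced_through :: "nat \<Rightarrow> (nat \<times> nat \<Rightarrow> bool option) \<Rightarrow> (nat \<Rightarrow> nat) \<Rightarrow> nat \<Rightarrow> nat \<Rightarrow> bool" where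
  "forced_through t \<sigma> c l r \<longleftrightarrow>
     (\<forall>c'. monotone_path t c' \<longrightarrow> (\<forall>i\<le>l. c' i = c i) \<longrightarrow> free_after t \<sigma> c' l \<longrightarrow> c' r = c r)"

text \<open>The path that leaves \<open>c\<close> at row \<open>l + 1\<close> and then runs along the boundary of the cone misses
  \<open>(ru, c ru)\<close>, so it must be blocked by a queried node outside the cone of \<open>(l + 1, c (l + 1))\<close>.\<close>

lemma forced_through_blocking_node:
  assumes mp: "monotone_path t c" and lru: "l < ru" "ru < t"
    and forced: "forced_through t \<sigma> c l ru"
  obtains x where "\<sigma> x \<noteq> None" "in_cone t (l, c l) x" "x \<noteq> (l, c l)"
    "\<not> in_cone t (Suc l, c (Suc l)) x"
proof -
  have step: "c (Suc l) = c l \<or> c (Suc l) = Suc (c l)"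
    using mp lru unfolding monotone_path_def by simp
  have bnd: "c (Suc l) \<le> c ru \<and> c ru \<le> c (Suc l) + (ru - Suc l)"
    using monotone_path_bounds[OF mp, of "Suc l" ru] lru by simp
  define c' where
    "c' r = (if r \<le> l then c r else if c (Suc l) = c l then c l + (r - l) else c l)" for r
  have "monotone_path t c'"
    unfolding monotone_path_def
  proof (intro conjI allI impI)
    show "c' 0 = 0" using mp unfolding c'_def monotone_path_def by simp
    fix r assume "Suc r < t"
    then show "c' (Suc r) = c' r \<or> c' (Suc r) = Suc (c' r)"
      using mp step unfolding c'_def monotone_path_def by (cases "Suc r \<le> l"; cases "r = l") auto
  qed
  moreover have "\<forall>r\<le>l. c' r = c r" unfolding c'_def by simp
  moreover have "c' ru \<noteq> c ru" using step bnd lru unfolding c'_def by auto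
  ultimately obtain r where r: "l < r" "r < t" "\<sigma> (r, c' r) \<noteq> None"
    using forced unfolding forced_through_def free_after_def by blast
  show ?thesis
  proof (rule that[of "(r, c' r)"])
    show "in_cone t (l, c l) (r, c' r)" using r step unfolding in_cone_def c'_def by auto
    show "\<not> in_cone t (Suc l, c (Suc l)) (r, c' r)" using r step unfolding in_cone_def c'_def by auto
  qed (use r in auto)
qed

lemma forced_through_Suc:
  assumes "forced_through t \<sigma> c l ru" "\<sigma> (Suc l, c (Suc l)) = None"
  shows "forced_through t \<sigma> c (Suc l) ru"
  unfolding forced_through_def
proof (intro allI impI)
  fix c' assume c': "monotone_path t c'" "\<forall>i\<le>Suc l. c' i = c i" "free_after t \<sigma> c' (Suc l)"
  then have "free_after t \<sigma> c' l"
    using assms(2) unfolding free_after_def by (metis le_refl less_Suc_eq_le linorder_neqE_nat not_less_eq)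
  then show "c' ru = c ru" using assms(1) c' unfolding forced_through_def by simp
qed

lemma forced_through_card_escape:
  assumes mp: "monotone_path t c" and ru: "ru < t"
  shows "l \<le> ru \<Longrightarrow> free_after t \<sigma> c l \<Longrightarrow> forced_through t \<sigma> c l ru \<Longrightarrow>
    ru - l \<le> card {w. in_cone t (l, c l) w \<and> w \<noteq> (l, c l) \<and> \<not> in_cone t (ru, c ru) w \<and> \<sigma> w \<noteq> None}"
proof (induction "ru - l" arbitrary: l)
  case (Suc d l)
  have lt: "l < ru" using Suc.hyps(2) by simp
  define v where "v = (Suc l, c (Suc l))"
  define S where "S = {w. in_cone t (l, c l) w \<and> w \<noteq> (l, c l) \<and> \<not> in_cone t (ru, c ru) w \<and> \<sigma> w \<noteq> None}"
  define S' where "S' = {w. in_cone t v w \<and> w \<noteq> v \<and> \<not> in_cone t (ru, c ru) w \<and> \<sigma> w \<noteq> None}"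
  obtain x where x: "\<sigma> x \<noteq> None" "in_cone t (l, c l) x" "x \<noteq> (l, c l)" "\<not> in_cone t v x"
    using forced_through_blocking_node[OF mp lt ru Suc.prems(3)] unfolding v_def by blast
  have v_free: "\<sigma> v = None" using Suc.prems(2) lt ru unfolding free_after_def v_def by simp
  have "ru - Suc l \<le> card S'"
    unfolding S'_def v_def
  proof (rule Suc.hyps(1))
    show "free_after t \<sigma> c (Suc l)" using Suc.prems(2) unfolding free_after_def by simp
    show "forced_through t \<sigma> c (Suc l) ru"
      using forced_through_Suc[OF Suc.prems(3)] v_free unfolding v_def by simp
  qed (use Suc.hyps(2) lt in auto)
  moreover have "card (insert x S') \<le> card S"
  proof (rule card_mono)
    show "finite S" unfolding S_def by (rule finite_cone)
    have lv: "in_cone t (l, c l) v" and vru: "in_cone t v (ru, c ru)"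
      using monotone_path_bounds[OF mp, of l "Suc l"] monotone_path_bounds[OF mp, of "Suc l" ru] lt ru
      unfolding in_cone_def v_def by auto
    have "\<not> in_cone t (ru, c ru) x" using x(4) in_cone_trans[OF vru] by blast
    moreover have "in_cone t (l, c l) w" "w \<noteq> (l, c l)" if "in_cone t v w" for w
      using in_cone_trans[OF lv that] that unfolding in_cone_def v_def by auto
    ultimately show "insert x S' \<subseteq> S" using x unfolding S_def S'_def by auto
  qed
  moreover have "x \<notin> S'" "finite S'" using x(4) finite_cone unfolding S'_def by auto
  ultimately show ?case using Suc.hyps(2) unfolding S_def by simp
qed simp

lemma adversary_step_on_path:
  assumes inv: "adversary_inv t \<sigma> c l" and r: "r \<le> l" "u = (r, c r)"
  shows "adversary_inv t (\<sigma>(u := Some False)) c l"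
    and "cone_load t (\<sigma>(u := Some False)) (l, c l) = cone_load t \<sigma> (l, c l)"
proof -
  show "adversary_inv t (\<sigma>(u := Some False)) c l"
    using inv r unfolding adversary_inv_def free_after_def by auto
  have "u \<notin> {w. in_cone t (l, c l) w \<and> w \<noteq> (l, c l)}" using r unfolding in_cone_def by auto
  then have "{w. in_cone t (l, c l) w \<and> w \<noteq> (l, c l) \<and> (\<sigma>(u := Some False)) w \<noteq> None} =
             {w. in_cone t (l, c l) w \<and> w \<noteq> (l, c l) \<and> \<sigma> w \<noteq> None}" by auto
  then show "cone_load t (\<sigma>(u := Some False)) (l, c l) = cone_load t \<sigma> (l, c l)"
    unfolding cone_load_def by simp
qed

lemma adversary_step_detour:
  assumes inv: "adversary_inv t \<sigma> c l" and off: "\<not> (\<exists>r\<le>l. u = (r, c r))"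
    and c': "monotone_path t c'" "\<forall>r\<le>l. c' r = c r" "free_after t (\<sigma>(u := Some True)) c' l"
  shows "adversary_inv t (\<sigma>(u := Some True)) c' l"
    and "cone_load t (\<sigma>(u := Some True)) (l, c' l) \<le> Suc (cone_load t \<sigma> (l, c l))"
proof -
  show "adversary_inv t (\<sigma>(u := Some True)) c' l"
    unfolding adversary_inv_def
  proof (intro conjI allI impI)
    fix r assume "r \<le> l"
    then show "(\<sigma>(u := Some True)) (r, c' r) \<noteq> Some True"
      using inv off c'(2) unfolding adversary_inv_def by auto
  next
    fix w assume "(\<sigma>(u := Some True)) w = Some False"
    then have "\<sigma> w = Some False" by (cases "w = u") auto
    then show "\<exists>r\<le>l. w = (r, c' r)" using inv c'(2) unfolding adversary_inv_def by fastforce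
  qed (use inv c' in \<open>auto simp: adversary_inv_def\<close>)
  let ?S = "\<lambda>\<sigma>. {w. in_cone t (l, c l) w \<and> w \<noteq> (l, c l) \<and> \<sigma> w \<noteq> None}"
  have "card (?S (\<sigma>(u := Some True))) \<le> card (insert u (?S \<sigma>))"
    by (rule card_mono) (auto intro: finite_cone)
  also have "\<dots> \<le> Suc (card (?S \<sigma>))" by (rule card_insert_le_m1) auto
  finally show "cone_load t (\<sigma>(u := Some True)) (l, c' l) \<le> Suc (cone_load t \<sigma> (l, c l))"
    unfolding cone_load_def using c'(2) by simp
qed

lemma adversary_inv_advance:
  assumes inv: "adversary_inv t \<sigma> c l" and ru: "l < ru" "ru < t" "u = (ru, c ru)"
  shows "adversary_inv t (\<sigma>(u := Some False)) c ru"
  unfolding adversary_inv_def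
proof (intro conjI allI impI)
  fix r assume "r \<le> ru"
  then show "(\<sigma>(u := Some False)) (r, c r) \<noteq> Some True"
    using inv ru unfolding adversary_inv_def free_after_def by (cases "r \<le> l") auto
next
  show "free_after t (\<sigma>(u := Some False)) c ru"
    using inv ru unfolding adversary_inv_def free_after_def by auto
next
  fix w assume "(\<sigma>(u := Some False)) w = Some False"
  show "\<exists>r\<le>ru. w = (r, c r)"
  proof (cases "w = u")
    case False
    with \<open>(\<sigma>(u := Some False)) w = Some False\<close> have "\<sigma> w = Some False" by simp
    then obtain r where "r \<le> l" "w = (r, c r)"
      using inv unfolding adversary_inv_def by blast
    then show ?thesis using ru(1) by (intro exI[of _ r]) auto
  qed (use ru in auto)
qed (use inv ru in \<open>auto simp: adversary_inv_def\<close>)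

text \<open>When every detour is blocked, the path is pushed down to the queried node; the rows skipped
  are paid for by queried nodes that leave the smaller cone.\<close>

lemma cone_load_advance:
  assumes inv: "adversary_inv t \<sigma> c l" and ru: "l < ru" "ru < t" "u = (ru, c ru)"
    and forced: "forced_through t \<sigma> c l ru"
  shows "ru + cone_load t (\<sigma>(u := Some False)) (ru, c ru) \<le> l + cone_load t \<sigma> (l, c l)"
proof -
  have mp: "monotone_path t c" and free: "free_after t \<sigma> c l"
    using inv unfolding adversary_inv_def by auto
  define Sc where "Sc = {w. in_cone t (l, c l) w \<and> w \<noteq> (l, c l) \<and> \<not> in_cone t (ru, c ru) w \<and> \<sigma> w \<noteq> None}"
  define Su where "Su = {w. in_cone t (ru, c ru) w \<and> w \<noteq> (ru, c ru) \<and> (\<sigma>(u := Some False)) w \<noteq> None}"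
  define S where "S = {w. in_cone t (l, c l) w \<and> w \<noteq> (l, c l) \<and> \<sigma> w \<noteq> None}"
  have "ru - l \<le> card Sc"
    unfolding Sc_def using forced_through_card_escape[OF mp ru(2)] ru(1) free forced by simp
  moreover have "card Sc + card Su \<le> card S"
  proof -
    have lu: "in_cone t (l, c l) (ru, c ru)"
      using monotone_path_bounds[OF mp, of l ru] ru unfolding in_cone_def by auto
    have "in_cone t (l, c l) w" "w \<noteq> (l, c l)" if "in_cone t (ru, c ru) w" for w
      using in_cone_trans[OF lu that] that ru(1) unfolding in_cone_def by auto
    then have "Sc \<union> Su \<subseteq> S" using ru(3) unfolding Sc_def Su_def S_def by auto
    moreover have "finite S" unfolding S_def by (rule finite_cone)
    moreover have "Sc \<inter> Su = {}" unfolding Sc_def Su_def by auto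
    ultimately show ?thesis by (metis card_Un_disjoint card_mono finite_Un finite_subset)
  qed
  ultimately show ?thesis
    using ru(1) unfolding cone_load_def Su_def S_def by linarith
qed

lemma adversary_step:
  assumes inv: "adversary_inv t \<sigma> c l" and u: "\<sigma> u = None"
  obtains b c' l' where "adversary_inv t (\<sigma>(u := Some b)) c' l'"
    "l' + cone_load t (\<sigma>(u := Some b)) (l', c' l') \<le> Suc (l + cone_load t \<sigma> (l, c l))"
    "l' = l \<or> l' + cone_load t (\<sigma>(u := Some b)) (l', c' l') \<le> l + cone_load t \<sigma> (l, c l)"
proof -
  have mp: "monotone_path t c" and free: "free_after t \<sigma> c l"
    using inv unfolding adversary_inv_def by auto
  consider (on_path) r where "r \<le> l" "u = (r, c r)"
    | (detour) c' where "\<not> (\<exists>r\<le>l. u = (r, c r))" "monotone_path t c'" "\<forall>r\<le>l. c' r = c r"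
        "free_after t (\<sigma>(u := Some True)) c' l"
    | (blocked) "\<forall>c'. monotone_path t c' \<longrightarrow> (\<forall>r\<le>l. c' r = c r) \<longrightarrow>
        \<not> free_after t (\<sigma>(u := Some True)) c' l"
    by blast
  then show ?thesis
  proof cases
    case on_path
    then show ?thesis using that adversary_step_on_path[OF inv on_path] by simp
  next
    case detour
    then show ?thesis using that adversary_step_detour[OF inv detour] by simp
  next
    case blocked
    have hits: "\<exists>r. l < r \<and> r < t \<and> (r, c' r) = u"
      if "monotone_path t c'" "\<forall>r\<le>l. c' r = c r" "free_after t \<sigma> c' l" for c'
      using blocked that unfolding free_after_def by (metis fun_upd_apply)
    then obtain ru where ru: "l < ru" "ru < t" "u = (ru, c ru)" using mp free by blast
    have "forced_through t \<sigma> c l ru"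
      unfolding forced_through_def using hits ru(3) by fastforce
    then show ?thesis using that adversary_inv_advance[OF inv ru] cone_load_advance[OF inv ru] by fastforce
  qed
qed

lemma pyramid_evades_of_adversary_inv:
  "adversary_inv t \<sigma> c l \<Longrightarrow> l < t - 1 \<Longrightarrow> l + cone_load t \<sigma> (l, c l) + j \<le> t - 1 \<Longrightarrow>
     pyramid_evades t j \<sigma>"
proof (induction j arbitrary: \<sigma> c l)
  case 0
  then show ?case using adversary_inv_no_clause_refuted by simp
next
  case (Suc j \<sigma> c l)
  have "\<exists>b. pyramid_evades t j (\<sigma>(u := Some b))" if u: "\<sigma> u = None" for u
  proof -
    obtain b c' l' where step: "adversary_inv t (\<sigma>(u := Some b)) c' l'"
      "l' + cone_load t (\<sigma>(u := Some b)) (l', c' l') \<le> Suc (l + cone_load t \<sigma> (l, c l))"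
      "l' = l \<or> l' + cone_load t (\<sigma>(u := Some b)) (l', c' l') \<le> l + cone_load t \<sigma> (l, c l)"
      using adversary_step[OF Suc.prems(1) u] by blast
    then have "pyramid_evades t j (\<sigma>(u := Some b))"
      using Suc.IH[OF step(1)] Suc.prems(2,3) by fastforce
    then show ?thesis by blast
  qed
  then show ?case using adversary_inv_no_clause_refuted Suc.prems by simp
qed

lemma pyramid_evades_empty: "2 \<le> t \<Longrightarrow> pyramid_evades t (t - 1) (\<lambda>_. None)"
  using pyramid_evades_of_adversary_inv[of t "\<lambda>_. None" "\<lambda>_. 0" 0 "t - 1"]
  unfolding adversary_inv_def monotone_path_def free_after_def cone_load_def by simp

section \<open>An adversary bound for deterministic decision trees\<close>

definition row_agrees :: "tab \<Rightarrow> (nat \<Rightarrow> bool option) \<Rightarrow> bool list \<times> nat set \<Rightarrow> bool" where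
  "row_agrees T \<rho> r \<longleftrightarrow> (\<forall>f b. \<rho> f = Some b \<longrightarrow> rval T r f = b)"

definition row_matches :: "tab \<Rightarrow> (nat \<times> bool) list \<Rightarrow> bool list \<times> nat set \<Rightarrow> bool" where
  "row_matches T \<alpha> r \<longleftrightarrow> (\<forall>p\<in>set \<alpha>. rval T r (fst p) = snd p)"

lemma set_sub_rows: "r \<in> set (sub_rows T \<alpha>) \<longleftrightarrow> r \<in> set (rows T) \<and> row_matches T \<alpha> r"
  unfolding sub_rows_def row_matches_def by auto

definition undetermined :: "tab \<Rightarrow> (nat \<Rightarrow> bool option) \<Rightarrow> bool" where
  "undetermined T \<rho> \<longleftrightarrow> (\<forall>d. \<exists>r\<in>set (rows T). row_agrees T \<rho> r \<and> d \<notin> snd r)"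

fun table_evades :: "tab \<Rightarrow> nat \<Rightarrow> (nat \<Rightarrow> bool option) \<Rightarrow> bool" where
  "table_evades T 0 \<rho> = undetermined T \<rho>"
| "table_evades T (Suc j) \<rho> =
     (undetermined T \<rho> \<and> (\<forall>f\<in>At T. \<rho> f = None \<longrightarrow> (\<exists>b. table_evades T j (\<rho>(f \<mapsto> b)))))"

lemma table_evades_undetermined: "table_evades T j \<rho> \<Longrightarrow> undetermined T \<rho>"
  by (cases j) auto

lemma table_evades_query:
  assumes "table_evades T j \<rho>" "f \<in> At T" "\<not> (j = 0 \<and> \<rho> f = None)"
  obtains b \<rho>' j' where "\<rho> \<subseteq>\<^sub>m \<rho>'" "\<rho>' f = Some b" "table_evades T j' \<rho>'" "j \<le> Suc j'"
proof (cases "\<rho> f")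
  case None
  with assms obtain j' b where "j = Suc j'" "table_evades T j' (\<rho>(f \<mapsto> b))" by (cases j) auto
  moreover have "\<rho> \<subseteq>\<^sub>m \<rho>(f \<mapsto> b)" using None by (auto simp: map_le_def)
  ultimately show ?thesis using that[of "\<rho>(f \<mapsto> b)" b j'] by simp
next
  case (Some b)
  then show ?thesis using that[of \<rho> b j] assms(1) by simp
qed

definition node_covers :: "tab \<Rightarrow> (nat \<Rightarrow> bool option) \<Rightarrow> dtree \<Rightarrow> bool" where
  "node_covers T \<rho> v \<longleftrightarrow>
     (\<forall>r\<in>set (rows T). row_agrees T \<rho> r \<longrightarrow> (\<exists>p\<in>set (node_paths v). row_matches T (fst p) r))"

definition node_correct :: "tab \<Rightarrow> (nat \<Rightarrow> bool option) \<Rightarrow> dtree \<Rightarrow> bool" where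
  "node_correct T \<rho> v \<longleftrightarrow> (\<forall>p\<in>set (node_paths v). \<forall>r\<in>set (rows T).
     row_agrees T \<rho> r \<longrightarrow> row_matches T (fst p) r \<longrightarrow> snd p \<in> snd r)"

lemma row_agrees_map_le: "\<rho> \<subseteq>\<^sub>m \<rho>' \<Longrightarrow> row_agrees T \<rho>' r \<Longrightarrow> row_agrees T \<rho> r"
  unfolding row_agrees_def map_le_def by (metis domI)

lemma node_covers_map_le: "\<rho> \<subseteq>\<^sub>m \<rho>' \<Longrightarrow> node_covers T \<rho> v \<Longrightarrow> node_covers T \<rho>' v"
  unfolding node_covers_def using row_agrees_map_le by blast

lemma node_correct_map_le: "\<rho> \<subseteq>\<^sub>m \<rho>' \<Longrightarrow> node_correct T \<rho> v \<Longrightarrow> node_correct T \<rho>' v"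
  unfolding node_correct_def using row_agrees_map_le by blast

lemma in_node_paths_Node: "p \<in> set (node_paths (Node f cs)) \<longleftrightarrow>
   (\<exists>bv\<in>set cs. \<exists>q\<in>set (node_paths (snd bv)). p = ((f, fst bv) # fst q, snd q))"
  by auto

lemma in_node_paths_NodeI:
  "(b, v) \<in> set cs \<Longrightarrow> q \<in> set (node_paths v) \<Longrightarrow> ((f, b) # fst q, snd q) \<in> set (node_paths (Node f cs))"
  by force

lemma node_path_branch:
  assumes "p \<in> set (node_paths (Node f cs))" "row_matches T (fst p) r"
  obtains v q where "(rval T r f, v) \<in> set cs" "q \<in> set (node_paths v)"
    "p = ((f, rval T r f) # fst q, snd q)" "row_matches T (fst q) r"
proof -
  obtain bv q where bv: "bv \<in> set cs" "q \<in> set (node_paths (snd bv))"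
    and p: "p = ((f, fst bv) # fst q, snd q)"
    using assms(1) unfolding in_node_paths_Node by blast
  have b: "fst bv = rval T r f" and "row_matches T (fst q) r"
    using assms(2) unfolding p row_matches_def by auto
  moreover have "bv = (rval T r f, snd bv)" by (simp add: b[symmetric])
  then have "(rval T r f, snd bv) \<in> set cs" using bv(1) by simp
  ultimately show ?thesis using that[of "snd bv" q] bv(2) p by simp
qed

lemma node_covers_branch:
  assumes "node_covers T \<rho> (Node f cs)" "undetermined T \<rho>" "\<rho> f = Some b"
  obtains v where "(b, v) \<in> set cs"
proof -
  obtain r where r: "r \<in> set (rows T)" "row_agrees T \<rho> r"
    using assms(2) unfolding undetermined_def by blast
  then obtain p where "p \<in> set (node_paths (Node f cs))" "row_matches T (fst p) r"
    using assms(1) unfolding node_covers_def by blast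
  moreover have "rval T r f = b" using r(2) assms(3) unfolding row_agrees_def by simp
  ultimately show ?thesis using that node_path_branch by blast
qed

lemma node_covers_child:
  assumes det: "det_node (Node f cs)" and cov: "node_covers T \<rho> (Node f cs)"
    and b: "\<rho> f = Some b" and v: "(b, v) \<in> set cs"
  shows "node_covers T \<rho> v"
  unfolding node_covers_def
proof (intro ballI impI)
  fix r assume r: "r \<in> set (rows T)" "row_agrees T \<rho> r"
  then obtain p where p: "p \<in> set (node_paths (Node f cs))" "row_matches T (fst p) r"
    using cov unfolding node_covers_def by blast
  have rb: "rval T r f = b" using r(2) b unfolding row_agrees_def by simp
  obtain v' q where q: "(b, v') \<in> set cs" "q \<in> set (node_paths v')" "row_matches T (fst q) r"
    using node_path_branch[OF p] unfolding rb by metis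
  have "v' = v" using det q(1) v eq_key_imp_eq_value by fastforce
  then show "\<exists>p\<in>set (node_paths v). row_matches T (fst p) r" using q by blast
qed

lemma node_correct_child:
  assumes cor: "node_correct T \<rho> (Node f cs)" and b: "\<rho> f = Some b" and v: "(b, v) \<in> set cs"
  shows "node_correct T \<rho> v"
  unfolding node_correct_def
proof (intro ballI impI)
  fix p r assume p: "p \<in> set (node_paths v)" and r: "r \<in> set (rows T)" "row_agrees T \<rho> r"
    and m: "row_matches T (fst p) r"
  have "row_matches T ((f, b) # fst p) r"
    using m r(2) b unfolding row_matches_def row_agrees_def by simp
  then have "snd ((f, b) # fst p, snd p) \<in> snd r"
    using cor r in_node_paths_NodeI[OF v p] unfolding node_correct_def by fastforce
  then show "snd p \<in> snd r" by simp
qed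

text \<open>The adversary answers each query so that the table stays undetermined; a correct
  deterministic tree can only stop once it is determined.\<close>

lemma det_node_long_path:
  "det_node v \<Longrightarrow> node_atts v \<subseteq> At T \<Longrightarrow> table_evades T j \<rho> \<Longrightarrow>
   node_covers T \<rho> v \<Longrightarrow> node_correct T \<rho> v \<Longrightarrow> \<exists>p\<in>set (node_paths v). j < length (fst p)"
proof (induction v arbitrary: j \<rho>)
  case (Leaf d)
  then obtain r where "r \<in> set (rows T)" "row_agrees T \<rho> r" "d \<notin> snd r"
    using table_evades_undetermined unfolding undetermined_def by blast
  with Leaf.prems(5) show ?case unfolding node_correct_def row_matches_def by simp
next
  case (Node f cs j \<rho>)
  have und: "undetermined T \<rho>" using table_evades_undetermined[OF Node.prems(3)] .
  show ?case
  proof (cases "j = 0 \<and> \<rho> f = None")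
    case True
    from und obtain r where "r \<in> set (rows T)" "row_agrees T \<rho> r" unfolding undetermined_def by blast
    then obtain p where "p \<in> set (node_paths (Node f cs))"
      using Node.prems(4) unfolding node_covers_def by blast
    then show ?thesis using True by auto
  next
    case False
    have "f \<in> At T" using Node.prems(2) by simp
    then obtain b \<rho>' j' where ext: "\<rho> \<subseteq>\<^sub>m \<rho>'" "\<rho>' f = Some b" "table_evades T j' \<rho>'" "j \<le> Suc j'"
      using table_evades_query[OF Node.prems(3) _ False] by blast
    have cov: "node_covers T \<rho>' (Node f cs)" and cor: "node_correct T \<rho>' (Node f cs)"
      using node_covers_map_le node_correct_map_le ext(1) Node.prems(4,5) by blast+
    obtain v where v: "(b, v) \<in> set cs"
      using node_covers_branch[OF cov table_evades_undetermined[OF ext(3)] ext(2)] .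
    have "\<exists>p\<in>set (node_paths v). j' < length (fst p)"
    proof (rule Node.IH)
      show "v \<in> Basic_BNFs.snds (b, v)" by simp
      show "det_node v" "node_atts v \<subseteq> At T" using Node.prems(1,2) v by force+
      show "node_covers T \<rho>' v" using node_covers_child[OF Node.prems(1) cov ext(2) v] .
      show "node_correct T \<rho>' v" using node_correct_child[OF cor ext(2) v] .
    qed (use v ext(3) in auto)
    then obtain p where "p \<in> set (node_paths v)" "j' < length (fst p)" by blast
    then obtain p where p: "p \<in> set (node_paths v)" "j' < length (fst p)" by blast
    have "((f, b) # fst p, snd p) \<in> set (node_paths (Node f cs))" using in_node_paths_NodeI[OF v p(1)] .
    moreover have "j < length ((f, b) # fst p)" using p(2) ext(4) by simp
    ultimately show ?thesis by (metis fst_conv)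
  qed
qed

lemma det_tree_long_path:
  assumes det: "det_tree_for \<Gamma> T" and ev: "table_evades T j Map.empty"
  shows "\<exists>p\<in>set (tree_paths \<Gamma>). j < length (fst p)"
proof -
  obtain v where \<Gamma>: "\<Gamma> = [v]" and dv: "det_node v"
    using det unfolding det_tree_for_def by (cases \<Gamma>) auto
  have nd: "nondet_tree_for [v] T" using det \<Gamma> unfolding det_tree_for_def by simp
  then have cov: "node_covers T Map.empty v" and atts: "node_atts v \<subseteq> At T"
    unfolding nondet_tree_for_def node_covers_def tree_paths_def tree_atts_def
    by (auto simp: set_sub_rows)
  have "node_correct T Map.empty v"
    unfolding node_correct_def
  proof (intro ballI impI)
    fix p r assume p: "p \<in> set (node_paths v)" and r: "r \<in> set (rows T)"
      and "row_agrees T Map.empty r" and m: "row_matches T (fst p) r"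
    have rs: "r \<in> set (sub_rows T (fst p))" using r m by (simp add: set_sub_rows)
    have "sub_rows T (fst p) = [] \<or> snd p \<in> Pi_rows (sub_rows T (fst p))"
      using nd p unfolding nondet_tree_for_def tree_paths_def by simp
    then show "snd p \<in> snd r" using rs unfolding Pi_rows_def by auto
  qed
  with cov atts have "\<exists>p\<in>set (node_paths v). j < length (fst p)"
    using det_node_long_path[OF dv _ ev] by blast
  then show ?thesis unfolding tree_paths_def \<Gamma> by simp
qed

section \<open>The pyramid formula as a decision table\<close>

definition tri_index :: "nat \<times> nat \<Rightarrow> nat" where
  "tri_index w = fst w * Suc (fst w) div 2 + snd w"

lemma triangle_Suc: "Suc r * Suc (Suc r) div 2 = r * Suc r div 2 + Suc r"
proof -
  have "Suc r * Suc (Suc r) = r * Suc r + 2 * Suc r" by simp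
  then show ?thesis by simp
qed

lemma triangle_mono: "r \<le> r' \<Longrightarrow> r * Suc r div 2 \<le> r' * Suc r' div 2"
  by (intro div_le_mono mult_le_mono) auto

lemma tri_index_bounds:
  "pyramid_node t w \<Longrightarrow> fst w * Suc (fst w) div 2 \<le> tri_index w \<and> tri_index w < Suc (fst w) * Suc (Suc (fst w)) div 2"
  unfolding tri_index_def pyramid_node_def triangle_Suc by auto

lemma tri_index_less: "pyramid_node t w \<Longrightarrow> tri_index w < t * Suc t div 2"
  using tri_index_bounds[of t w] triangle_mono[of "Suc (fst w)" t]
  unfolding pyramid_node_def by fastforce

lemma inj_on_tri_index: "inj_on tri_index (Collect (pyramid_node t))"
proof (rule inj_onI)
  have row_le: "fst w \<le> fst w'"
    if "pyramid_node t w" "pyramid_node t w'" "tri_index w = tri_index w'" for w w'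
  proof (rule ccontr)
    assume "\<not> fst w \<le> fst w'"
    then have "Suc (fst w') * Suc (Suc (fst w')) div 2 \<le> fst w * Suc (fst w) div 2"
      using triangle_mono[of "Suc (fst w')" "fst w"] by simp
    then show False using tri_index_bounds[OF that(1)] tri_index_bounds[OF that(2)] that(3) by linarith
  qed
  fix w w' assume "w \<in> Collect (pyramid_node t)" "w' \<in> Collect (pyramid_node t)" "tri_index w = tri_index w'"
  then have "fst w = fst w'" using row_le by (metis le_antisym mem_Collect_eq)
  with \<open>tri_index w = tri_index w'\<close> show "w = w'" unfolding tri_index_def by (simp add: prod_eq_iff)
qed

definition falsifies :: "((nat \<times> nat) \<times> bool) list \<Rightarrow> bool list \<Rightarrow> bool" where
  "falsifies C xs \<longleftrightarrow> (\<forall>l\<in>set C. xs ! tri_index (fst l) \<noteq> snd l)"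

text \<open>Decision \<open>0\<close> names the sink clause and decision \<open>tri_index w + 1\<close> the clause of node \<open>w\<close>.\<close>

definition falsified_clauses :: "nat \<Rightarrow> bool list \<Rightarrow> nat set" where
  "falsified_clauses t xs = {d. (d = 0 \<and> falsifies sink_clause xs)
     \<or> (\<exists>w. pyramid_node t w \<and> d = Suc (tri_index w) \<and> falsifies (node_clause t w) xs)}"

lemma finite_falsified_clauses: "finite (falsified_clauses t xs)"
  by (rule finite_subset[of _ "{..t * Suc t div 2}"]) (auto simp: falsified_clauses_def dest: tri_index_less)

lemma sink_clause_node: "1 \<le> t \<Longrightarrow> l \<in> set sink_clause \<Longrightarrow> pyramid_node t (fst l)"
  unfolding sink_clause_def pyramid_node_def by auto

lemma node_clause_node: "pyramid_node t w \<Longrightarrow> l \<in> set (node_clause t w) \<Longrightarrow> pyramid_node t (fst l)"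
  unfolding node_clause_def pyramid_node_def by (auto split: if_splits)

lemma length_node_clause: "length (node_clause t w) \<le> 3"
  unfolding node_clause_def by simp

lemma falsifies_node_clause_below:
  "r < t \<Longrightarrow> s \<le> r \<Longrightarrow> \<not> xs ! tri_index (r, s) \<Longrightarrow> \<exists>w. pyramid_node t w \<and> falsifies (node_clause t w) xs"
proof (induction "t - r" arbitrary: r s)
  case (Suc d r s)
  have node: "pyramid_node t (r, s)" using Suc.prems unfolding pyramid_node_def by simp
  show ?case
  proof (cases "Suc r = t \<or> xs ! tri_index (Suc r, s) \<and> xs ! tri_index (Suc r, Suc s)")
    case True
    then have "falsifies (node_clause t (r, s)) xs"
      using Suc.prems unfolding node_clause_def falsifies_def by auto
    then show ?thesis using node by blast
  next
    case False
    then show ?thesis using Suc.hyps Suc.prems by (metis Suc_diff_Suc Suc_le_mono Suc_lessI le_SucI old.nat.inject)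
  qed
qed simp

lemma falsified_clauses_nonempty: "1 \<le> t \<Longrightarrow> falsified_clauses t xs \<noteq> {}"
  using falsifies_node_clause_below[of 0 t 0 xs]
  unfolding falsified_clauses_def falsifies_def sink_clause_def by auto

lemma no_clause_refuted_literal:
  assumes "no_clause_refuted t \<sigma>" "1 \<le> t"
  obtains l where "pyramid_node t (fst l)" "literal_unrefuted \<sigma> l" "d = 0 \<longrightarrow> l \<in> set sink_clause"
    "\<forall>w. pyramid_node t w \<longrightarrow> d = Suc (tri_index w) \<longrightarrow> l \<in> set (node_clause t w)"
proof (cases "\<exists>w. pyramid_node t w \<and> d = Suc (tri_index w)")
  case True
  then obtain w where w: "pyramid_node t w" "d = Suc (tri_index w)" by blast
  then obtain l where "l \<in> set (node_clause t w)" "literal_unrefuted \<sigma> l"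
    using assms(1) unfolding no_clause_refuted_def by blast
  moreover have "w' = w" if "pyramid_node t w'" "d = Suc (tri_index w')" for w'
    using inj_on_tri_index[of t] w that by (auto dest: inj_onD)
  ultimately show ?thesis using that node_clause_node[OF w(1)] w by blast
next
  case False
  obtain l where "l \<in> set sink_clause" "literal_unrefuted \<sigma> l"
    using assms(1) unfolding no_clause_refuted_def by blast
  then show ?thesis using that sink_clause_node[OF assms(2)] False by blast
qed

definition pyramid_assignment :: "nat list \<Rightarrow> nat \<Rightarrow> (nat \<Rightarrow> bool option) \<Rightarrow> nat \<times> nat \<Rightarrow> bool option" where
  "pyramid_assignment qa t \<rho> w = (if pyramid_node t w then \<rho> (qa ! tri_index w) else None)"

text \<open>The attribute \<open>qa ! tri_index w\<close> carries the variable of node \<open>w\<close>; the remaining attributes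
  are irrelevant to the decisions.\<close>

locale pyramid_table =
  fixes T :: tab and qa :: "nat list" and k t :: nat
  assumes attrs_T: "attrs T = qa" and distinct_qa: "distinct qa" and length_qa: "length qa = k"
    and set_rows_T: "set (rows T) = (\<lambda>xs. (xs, falsified_clauses t xs)) ` {xs. length xs = k}"
    and triangle_le: "t * Suc t div 2 \<le> k" and t_ge_1: "1 \<le> t"
begin

lemma At_T: "At T = set qa"
  unfolding At_def attrs_T ..

lemma rows_T_iff: "r \<in> set (rows T) \<longleftrightarrow> length (fst r) = k \<and> snd r = falsified_clauses t (fst r)"
  using set_rows_T by (cases r) auto

lemma rval_nth: "i < k \<Longrightarrow> length (fst r) = k \<Longrightarrow> rval T r (qa ! i) = fst r ! i"
  unfolding rval_def attrs_T using map_of_zip_nth[of qa "fst r" i] distinct_qa length_qa by simp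

lemma tri_index_less_k: "pyramid_node t w \<Longrightarrow> tri_index w < k"
  using tri_index_less[of t w] triangle_le by simp

lemma node_attr_eq_iff: "pyramid_node t w \<Longrightarrow> pyramid_node t w' \<Longrightarrow> qa ! tri_index w = qa ! tri_index w' \<longleftrightarrow> w = w'"
  using nth_eq_iff_index_eq[OF distinct_qa] tri_index_less_k length_qa inj_on_tri_index[of t]
  by (metis inj_onD mem_Collect_eq)

lemma row_extending:
  assumes l: "pyramid_node t (fst l)" and unref: "literal_unrefuted (pyramid_assignment qa t \<rho>) l"
    and dom: "dom \<rho> \<subseteq> set qa"
  obtains xs where "length xs = k" "xs ! tri_index (fst l) = snd l"
    "row_agrees T \<rho> (xs, falsified_clauses t xs)"
proof -
  define xs where "xs = map (\<lambda>i. if i = tri_index (fst l) then snd l else \<rho> (qa ! i) = Some True) [0..<k]"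
  have len: "length xs = k" unfolding xs_def by simp
  have xs_nth: "xs ! i = (if i = tri_index (fst l) then snd l else \<rho> (qa ! i) = Some True)"
    if "i < k" for i unfolding xs_def using that by simp
  have "rval T (xs, falsified_clauses t xs) f = b" if fb: "\<rho> f = Some b" for f b
  proof -
    have "f \<in> set qa" using dom fb by auto
    then obtain i where i: "i < k" "f = qa ! i" using length_qa by (auto simp: in_set_conv_nth)
    show ?thesis
    proof (cases "i = tri_index (fst l)")
      case True
      then have "pyramid_assignment qa t \<rho> (fst l) = Some b"
        unfolding pyramid_assignment_def using l fb i(2) by simp
      then have "b = snd l" using unref unfolding literal_unrefuted_def by (cases b) auto
      then show ?thesis using rval_nth[OF i(1)] len xs_nth i True by simp
    qed (use rval_nth[OF i(1)] len xs_nth i fb in simp)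
  qed
  then show ?thesis
    using that[of xs] len xs_nth tri_index_less_k[OF l] unfolding row_agrees_def by simp
qed

lemma undetermined_of_no_clause_refuted:
  assumes nf: "no_clause_refuted t (pyramid_assignment qa t \<rho>)" and dom: "dom \<rho> \<subseteq> set qa"
  shows "undetermined T \<rho>"
  unfolding undetermined_def
proof
  fix d
  obtain l where l: "pyramid_node t (fst l)" "literal_unrefuted (pyramid_assignment qa t \<rho>) l"
    "d = 0 \<longrightarrow> l \<in> set sink_clause"
    "\<forall>w. pyramid_node t w \<longrightarrow> d = Suc (tri_index w) \<longrightarrow> l \<in> set (node_clause t w)"
    using no_clause_refuted_literal[OF nf t_ge_1] by blast
  obtain xs where xs: "length xs = k" "xs ! tri_index (fst l) = snd l"
    "row_agrees T \<rho> (xs, falsified_clauses t xs)"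
    using row_extending[OF l(1,2) dom] by blast
  have "d \<notin> falsified_clauses t xs"
    using l(3,4) xs(2) unfolding falsified_clauses_def falsifies_def by auto
  moreover have "(xs, falsified_clauses t xs) \<in> set (rows T)" using xs(1) rows_T_iff by simp
  ultimately show "\<exists>r\<in>set (rows T). row_agrees T \<rho> r \<and> d \<notin> snd r"
    using xs(3) by (intro bexI) auto
qed

lemma pyramid_assignment_upd_node:
  "pyramid_node t u \<Longrightarrow> pyramid_assignment qa t (\<rho>(qa ! tri_index u \<mapsto> b)) =
     (pyramid_assignment qa t \<rho>)(u := Some b)"
  unfolding pyramid_assignment_def using node_attr_eq_iff by fastforce

lemma pyramid_assignment_upd_other:
  "\<not> (\<exists>u. pyramid_node t u \<and> f = qa ! tri_index u) \<Longrightarrow>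
     pyramid_assignment qa t (\<rho>(f \<mapsto> b)) = pyramid_assignment qa t \<rho>"
  unfolding pyramid_assignment_def by fastforce

lemma table_evades_of_pyramid_evades:
  "pyramid_evades t j (pyramid_assignment qa t \<rho>) \<Longrightarrow> dom \<rho> \<subseteq> set qa \<Longrightarrow> table_evades T j \<rho>"
proof (induction j arbitrary: \<rho>)
  case 0
  then show ?case using undetermined_of_no_clause_refuted by simp
next
  case (Suc j \<rho>)
  have "\<exists>b. table_evades T j (\<rho>(f \<mapsto> b))" if f: "f \<in> At T" "\<rho> f = None" for f
  proof -
    have dom': "dom (\<rho>(f \<mapsto> b)) \<subseteq> set qa" for b using Suc.prems(2) f(1) At_T by auto
    show ?thesis
    proof (cases "\<exists>u. pyramid_node t u \<and> f = qa ! tri_index u")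
      case True
      then obtain u where u: "pyramid_node t u" "f = qa ! tri_index u" by blast
      then have "pyramid_assignment qa t \<rho> u = None" unfolding pyramid_assignment_def using f by simp
      moreover have "\<forall>u. pyramid_node t u \<longrightarrow> pyramid_assignment qa t \<rho> u = None \<longrightarrow>
          (\<exists>b. pyramid_evades t j ((pyramid_assignment qa t \<rho>)(u := Some b)))"
        using Suc.prems(1) by (simp del: fun_upd_apply)
      ultimately obtain b where "pyramid_evades t j ((pyramid_assignment qa t \<rho>)(u := Some b))"
        using u(1) by blast
      then show ?thesis
        using Suc.IH[OF _ dom'] pyramid_assignment_upd_node[OF u(1)] u(2) by metis
    next
      case False
      then show ?thesis
        using Suc.IH[OF _ dom'] pyramid_evades_Suc_imp[OF Suc.prems(1)]
          pyramid_assignment_upd_other by metis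
    qed
  qed
  then show ?case using undetermined_of_no_clause_refuted Suc.prems by simp
qed

lemma table_evades_empty: "2 \<le> t \<Longrightarrow> table_evades T (t - 1) Map.empty"
  using table_evades_of_pyramid_evades[of "t - 1" Map.empty] pyramid_evades_empty[of t]
  unfolding pyramid_assignment_def by (simp add: fun_eq_iff)

end

section \<open>Decision trees for the pyramid table\<close>

lemma pb_measure_le_length_mult:
  assumes "pb_measure \<psi>" "\<forall>f\<in>set fs. \<psi> [f] \<le> n"
  shows "\<psi> fs \<le> length fs * n"
  using assms(2)
proof (induction fs)
  case Nil
  have "\<psi> [] = 0" using assms(1) unfolding pb_measure_def by blast
  then show ?case by simp
next
  case (Cons f fs)
  have "\<psi> ([f] @ fs) \<le> \<psi> [f] + \<psi> fs" using assms(1) unfolding pb_measure_def by blast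
  then show ?case using Cons by simp
qed

lemma psi_tree_ge: "\<tau> \<in> set (tree_paths \<Gamma>) \<Longrightarrow> \<psi> (map fst (fst \<tau>)) \<le> psi_tree \<psi> \<Gamma>"
  unfolding psi_tree_def by (rule Max_ge) auto

lemma psi_tree_le:
  "tree_paths \<Gamma> \<noteq> [] \<Longrightarrow> (\<forall>\<tau>\<in>set (tree_paths \<Gamma>). \<psi> (map fst (fst \<tau>)) \<le> m) \<Longrightarrow> psi_tree \<psi> \<Gamma> \<le> m"
  unfolding psi_tree_def by (subst Max_le_iff) auto

lemma psi_a_le_psi_tree: "nondet_tree_for \<Gamma> T \<Longrightarrow> psi_a \<psi> T \<le> psi_tree \<psi> \<Gamma>"
  unfolding psi_a_def by (auto intro: Least_le)

lemma psi_d_attained: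
  assumes "T \<noteq> Lambda" "det_tree_for \<Gamma>\<^sub>0 T"
  obtains \<Gamma> where "det_tree_for \<Gamma> T" "psi_d \<psi> T = psi_tree \<psi> \<Gamma>"
proof -
  let ?P = "\<lambda>m. \<exists>\<Gamma>. det_tree_for \<Gamma> T \<and> psi_tree \<psi> \<Gamma> = m"
  have "?P (Least ?P)" using assms(2) by (intro LeastI) blast
  then show ?thesis using that assms(1) unfolding psi_d_def by auto
qed

text \<open>The list \<open>bs\<close> holds the answers given so far, most recent first.\<close>

fun full_tree :: "(bool list \<Rightarrow> nat set) \<Rightarrow> nat list \<Rightarrow> bool list \<Rightarrow> dtree" where
  "full_tree \<nu> [] bs = Leaf (SOME d. d \<in> \<nu> (rev bs))"
| "full_tree \<nu> (f # fs) bs =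
     Node f [(False, full_tree \<nu> fs (False # bs)), (True, full_tree \<nu> fs (True # bs))]"

lemma lists_length_Suc:
  "{ys :: bool list. length ys = Suc n} = Cons False ` {ys. length ys = n} \<union> Cons True ` {ys. length ys = n}"
proof (rule set_eqI)
  fix ys :: "bool list"
  show "ys \<in> {ys. length ys = Suc n} \<longleftrightarrow> ys \<in> Cons False ` {ys. length ys = n} \<union> Cons True ` {ys. length ys = n}"
    by (cases ys) (auto simp: image_iff)
qed

lemma set_node_paths_full_tree:
  "set (node_paths (full_tree \<nu> fs bs)) =
     (\<lambda>ys. (zip fs ys, SOME d. d \<in> \<nu> (rev bs @ ys))) ` {ys. length ys = length fs}"
proof (induction fs arbitrary: bs)
  case (Cons f fs)
  show ?case
    unfolding full_tree.simps node_paths.simps length_Cons lists_length_Suc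
    by (simp add: Cons.IH image_Un image_image)
qed simp

lemma full_tree_wf: "wf_node (full_tree \<nu> fs bs)"
  by (induction fs arbitrary: bs) auto

lemma full_tree_det: "det_node (full_tree \<nu> fs bs)"
  by (induction fs arbitrary: bs) auto

lemma node_atts_full_tree: "node_atts (full_tree \<nu> fs bs) \<subseteq> set fs"
  by (induction fs arbitrary: bs) auto

fun clause_chain :: "nat list \<Rightarrow> ((nat \<times> nat) \<times> bool) list \<Rightarrow> nat \<Rightarrow> dtree" where
  "clause_chain qa [] d = Leaf d"
| "clause_chain qa (l # ls) d = Node (qa ! tri_index (fst l)) [(\<not> snd l, clause_chain qa ls d)]"

definition clause_word :: "nat list \<Rightarrow> ((nat \<times> nat) \<times> bool) list \<Rightarrow> (nat \<times> bool) list" where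
  "clause_word qa C = map (\<lambda>l. (qa ! tri_index (fst l), \<not> snd l)) C"

lemma node_paths_clause_chain: "node_paths (clause_chain qa ls d) = [(clause_word qa ls, d)]"
  unfolding clause_word_def by (induction ls) auto

lemma clause_chain_wf: "wf_node (clause_chain qa ls d)"
  by (induction ls) auto

lemma node_atts_clause_chain: "node_atts (clause_chain qa ls d) = (\<lambda>l. qa ! tri_index (fst l)) ` set ls"
  by (induction ls) auto

definition pyramid_nodes :: "nat \<Rightarrow> (nat \<times> nat) list" where
  "pyramid_nodes t = concat (map (\<lambda>r. map (\<lambda>s. (r, s)) [0..<Suc r]) [0..<t])"

lemma set_pyramid_nodes: "set (pyramid_nodes t) = Collect (pyramid_node t)"
  unfolding pyramid_nodes_def pyramid_node_def by (auto simp: image_iff)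

text \<open>One branch per clause, testing whether the row falsifies it: a nondeterministic tree
  that guesses a falsified clause.\<close>

definition clause_forest :: "nat list \<Rightarrow> nat \<Rightarrow> dtree list" where
  "clause_forest qa t = clause_chain qa sink_clause 0
     # map (\<lambda>w. clause_chain qa (node_clause t w) (Suc (tri_index w))) (pyramid_nodes t)"

lemma tree_paths_clause_forest: "p \<in> set (tree_paths (clause_forest qa t)) \<longleftrightarrow>
  p = (clause_word qa sink_clause, 0) \<or>
  (\<exists>w. pyramid_node t w \<and> p = (clause_word qa (node_clause t w), Suc (tri_index w)))"
  unfolding tree_paths_def clause_forest_def using set_pyramid_nodes[of t]
  by (auto simp: node_paths_clause_chain)

context pyramid_table
begin

lemma node_attr_in_qa: "pyramid_node t w \<Longrightarrow> qa ! tri_index w \<in> set qa"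
  using tri_index_less_k length_qa by simp

lemma row_matches_clause_word:
  assumes "r \<in> set (rows T)" "\<forall>l\<in>set C. pyramid_node t (fst l)"
  shows "row_matches T (clause_word qa C) r \<longleftrightarrow> falsifies C (fst r)"
proof -
  have "length (fst r) = k" using assms(1) rows_T_iff by simp
  then have "rval T r (qa ! tri_index (fst l)) = fst r ! tri_index (fst l)" if "l \<in> set C" for l
    using rval_nth tri_index_less_k assms(2) that by blast
  then show ?thesis unfolding row_matches_def clause_word_def falsifies_def by auto
qed

lemma clause_forest_paths:
  assumes "p \<in> set (tree_paths (clause_forest qa t))"
  obtains C where "fst p = clause_word qa C" "length C \<le> 3" "\<forall>l\<in>set C. pyramid_node t (fst l)"
    "\<forall>r\<in>set (rows T). falsifies C (fst r) \<longrightarrow> snd p \<in> snd r"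
proof -
  have sink: "\<forall>l\<in>set sink_clause. pyramid_node t (fst l)" using sink_clause_node t_ge_1 by blast
  from assms consider "p = (clause_word qa sink_clause, 0)"
    | w where "pyramid_node t w" "p = (clause_word qa (node_clause t w), Suc (tri_index w))"
    unfolding tree_paths_clause_forest by blast
  then show ?thesis
  proof cases
    case 1
    then show ?thesis using that[of sink_clause] sink rows_T_iff
      by (auto simp: sink_clause_def falsified_clauses_def)
  next
    case 2
    have "Suc (tri_index w) \<in> snd r" if "r \<in> set (rows T)" "falsifies (node_clause t w) (fst r)" for r
      using that 2(1) rows_T_iff unfolding falsified_clauses_def by blast
    then show ?thesis
      using that[of "node_clause t w"] 2(2) length_node_clause[of t w] node_clause_node[OF 2(1)] by auto
  qed
qed

lemma clause_forest_covers:
  assumes r: "r \<in> set (rows T)"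
  shows "\<exists>\<tau>\<in>set (tree_paths (clause_forest qa t)). r \<in> set (sub_rows T (fst \<tau>))"
proof -
  obtain d where "d \<in> falsified_clauses t (fst r)" using falsified_clauses_nonempty[OF t_ge_1] by blast
  then consider "falsifies sink_clause (fst r)"
    | w where "pyramid_node t w" "falsifies (node_clause t w) (fst r)"
    unfolding falsified_clauses_def by blast
  then show ?thesis
  proof cases
    case 1
    have "r \<in> set (sub_rows T (clause_word qa sink_clause))"
      using r 1 row_matches_clause_word[OF r] sink_clause_node[OF t_ge_1] by (simp add: set_sub_rows)
    moreover have "(clause_word qa sink_clause, 0) \<in> set (tree_paths (clause_forest qa t))"
      using tree_paths_clause_forest by blast
    ultimately show ?thesis by force
  next
    case 2
    have "r \<in> set (sub_rows T (clause_word qa (node_clause t w)))"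
      using r 2(2) row_matches_clause_word[OF r] node_clause_node[OF 2(1)] by (simp add: set_sub_rows)
    moreover have "(clause_word qa (node_clause t w), Suc (tri_index w)) \<in> set (tree_paths (clause_forest qa t))"
      using 2(1) tree_paths_clause_forest by blast
    ultimately show ?thesis by force
  qed
qed

lemma nondet_clause_forest: "nondet_tree_for (clause_forest qa t) T"
  unfolding nondet_tree_for_def
proof (intro conjI ballI)
  show "wf_dtree (clause_forest qa t)"
    unfolding wf_dtree_def clause_forest_def using clause_chain_wf by auto
  have "node_atts v \<subseteq> set qa" if "v \<in> set (clause_forest qa t)" for v
  proof -
    from that consider "v = clause_chain qa sink_clause 0"
      | w where "pyramid_node t w" "v = clause_chain qa (node_clause t w) (Suc (tri_index w))"
      using set_pyramid_nodes[of t] unfolding clause_forest_def by auto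
    then show ?thesis
      using sink_clause_node[OF t_ge_1] node_clause_node node_attr_in_qa
      by cases (auto simp: node_atts_clause_chain)
  qed
  then show "tree_atts (clause_forest qa t) \<subseteq> At T" unfolding tree_atts_def At_T by blast
next
  fix r assume "r \<in> set (rows T)"
  then show "\<exists>\<tau>\<in>set (tree_paths (clause_forest qa t)). r \<in> set (sub_rows T (fst \<tau>))"
    by (rule clause_forest_covers)
next
  fix \<tau> assume "\<tau> \<in> set (tree_paths (clause_forest qa t))"
  then obtain C where C: "fst \<tau> = clause_word qa C" "\<forall>l\<in>set C. pyramid_node t (fst l)"
    "\<forall>r\<in>set (rows T). falsifies C (fst r) \<longrightarrow> snd \<tau> \<in> snd r"
    using clause_forest_paths by metis
  have "snd \<tau> \<in> snd r" if "r \<in> set (sub_rows T (fst \<tau>))" for r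
  proof -
    have "r \<in> set (rows T)" "row_matches T (clause_word qa C) r" using that C(1) by (auto simp: set_sub_rows)
    then show ?thesis using C(2,3) row_matches_clause_word by blast
  qed
  then show "sub_rows T (fst \<tau>) = [] \<or> snd \<tau> \<in> Pi_rows (sub_rows T (fst \<tau>))"
    unfolding Pi_rows_def by blast
qed

lemma row_matches_zip_iff:
  assumes "r \<in> set (rows T)" "length ys = k"
  shows "row_matches T (zip qa ys) r \<longleftrightarrow> fst r = ys"
proof -
  have lr: "length (fst r) = k" using assms(1) rows_T_iff by simp
  have "row_matches T (zip qa ys) r \<longleftrightarrow> (\<forall>i<k. fst r ! i = ys ! i)"
    unfolding row_matches_def using rval_nth[OF _ lr] length_qa assms(2) by (auto simp: set_zip)
  also have "\<dots> \<longleftrightarrow> fst r = ys" using lr assms(2) by (auto simp: list_eq_iff_nth_eq)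
  finally show ?thesis .
qed

lemma tree_paths_full_tree:
  "set (tree_paths [full_tree (falsified_clauses t) qa []]) =
     (\<lambda>ys. (zip qa ys, SOME d. d \<in> falsified_clauses t ys)) ` {ys. length ys = k}"
  unfolding tree_paths_def using set_node_paths_full_tree[of "falsified_clauses t" qa "[]"] length_qa by simp

lemma det_full_tree: "det_tree_for [full_tree (falsified_clauses t) qa []] T"
  unfolding det_tree_for_def nondet_tree_for_def
proof (intro conjI ballI)
  let ?v = "full_tree (falsified_clauses t) qa []"
  show "wf_dtree [?v]" unfolding wf_dtree_def using full_tree_wf by simp
  show "tree_atts [?v] \<subseteq> At T" unfolding tree_atts_def At_T using node_atts_full_tree by simp
  show "length [?v] = 1" by simp
  show "det_node v" if "v \<in> set [?v]" for v using that full_tree_det by simp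
  fix r assume r: "r \<in> set (rows T)"
  then have "length (fst r) = k" using rows_T_iff by simp
  then show "\<exists>\<tau>\<in>set (tree_paths [?v]). r \<in> set (sub_rows T (fst \<tau>))"
    unfolding tree_paths_full_tree using r row_matches_zip_iff by (auto simp: set_sub_rows)
next
  fix \<tau> assume "\<tau> \<in> set (tree_paths [full_tree (falsified_clauses t) qa []])"
  then obtain ys where ys: "length ys = k" "\<tau> = (zip qa ys, SOME d. d \<in> falsified_clauses t ys)"
    unfolding tree_paths_full_tree by auto
  have "(SOME d. d \<in> falsified_clauses t ys) \<in> falsified_clauses t ys"
    using falsified_clauses_nonempty[OF t_ge_1] by (simp add: some_in_eq)
  then have "\<forall>r\<in>set (sub_rows T (fst \<tau>)). snd \<tau> \<in> snd r"
    using row_matches_zip_iff ys rows_T_iff by (auto simp: set_sub_rows)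
  then show "sub_rows T (fst \<tau>) = [] \<or> snd \<tau> \<in> Pi_rows (sub_rows T (fst \<tau>))"
    unfolding Pi_rows_def by blast
qed

lemma T_ne_Lambda: "2 \<le> t \<Longrightarrow> T \<noteq> Lambda"
  using triangle_mono[of 2 t] triangle_le length_qa attrs_T unfolding Lambda_def by auto

lemma psi_a_le:
  assumes "pb_measure \<psi>" "\<forall>f\<in>set qa. \<psi> [f] \<le> n"
  shows "psi_a \<psi> T \<le> 3 * n"
proof -
  have "\<psi> (map fst (fst \<tau>)) \<le> 3 * n" if \<tau>: "\<tau> \<in> set (tree_paths (clause_forest qa t))" for \<tau>
  proof -
    obtain C where C: "fst \<tau> = clause_word qa C" "length C \<le> 3" "\<forall>l\<in>set C. pyramid_node t (fst l)"
      using clause_forest_paths[OF \<tau>] by metis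
    have "\<forall>f\<in>set (map fst (fst \<tau>)). \<psi> [f] \<le> n"
      using C(1,3) assms(2) node_attr_in_qa by (auto simp: clause_word_def)
    then have "\<psi> (map fst (fst \<tau>)) \<le> length C * n"
      using pb_measure_le_length_mult[OF assms(1)] C(1) by (fastforce simp: clause_word_def)
    also have "\<dots> \<le> 3 * n" using C(2) by simp
    finally show ?thesis .
  qed
  moreover have "(clause_word qa sink_clause, 0) \<in> set (tree_paths (clause_forest qa t))"
    using tree_paths_clause_forest by blast
  then have "tree_paths (clause_forest qa t) \<noteq> []" by auto
  ultimately show ?thesis
    using psi_tree_le psi_a_le_psi_tree[OF nondet_clause_forest] by (metis le_trans)
qed

lemma psi_d_ge:
  assumes "bounded_measure \<psi>" "2 \<le> t"
  shows "t \<le> psi_d \<psi> T"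
proof -
  obtain \<Gamma> where \<Gamma>: "det_tree_for \<Gamma> T" "psi_d \<psi> T = psi_tree \<psi> \<Gamma>"
    using psi_d_attained[OF T_ne_Lambda[OF assms(2)] det_full_tree] .
  obtain p where p: "p \<in> set (tree_paths \<Gamma>)" "t - 1 < length (fst p)"
    using det_tree_long_path[OF \<Gamma>(1) table_evades_empty[OF assms(2)]] by blast
  have "t \<le> length (map fst (fst p))" using p(2) assms(2) by simp
  also have "\<dots> \<le> \<psi> (map fst (fst p))" using assms(1) unfolding bounded_measure_def by blast
  also have "\<dots> \<le> psi_d \<psi> T" using psi_tree_ge[OF p(1)] \<Gamma>(2) by simp
  finally show ?thesis .
qed

end

section \<open>Complete tables in a closed class\<close>

lemma At_J_op: "At (J_op \<nu> T) = At T"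
  unfolding J_op_def At_def by simp

lemma At_I_op_subset: "At (I_op D T) \<subseteq> At T"
  unfolding I_op_def At_def Lambda_def by auto

lemma At_subset_of_cl_tab: "Q \<in> cl_tab T \<Longrightarrow> At Q \<subseteq> At T"
  unfolding cl_tab_def by (force simp: At_J_op dest: subsetD[OF At_I_op_subset])

lemma closed_class_cl_tab: "closed_class A \<Longrightarrow> T \<in> A \<Longrightarrow> Q \<in> cl_tab T \<Longrightarrow> Q \<in> A"
  unfolding closed_class_def cl_def by blast

lemma Lambda_in_closed_class:
  assumes "closed_class A" "nontrivial A"
  shows "Lambda \<in> A"
proof -
  obtain T where T: "T \<in> A" using assms(2) unfolding nontrivial_def by blast
  have "J_op (\<lambda>_. {0}) (I_op (At T) T) \<in> cl_tab T" unfolding cl_tab_def by blast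
  moreover have "J_op (\<lambda>_. {0}) (I_op (At T) T) = Lambda" unfolding I_op_def J_op_def Lambda_def by simp
  ultimately show ?thesis using closed_class_cl_tab[OF assms(1) T] by simp
qed

lemma fst_set_dedup: "fst ` set (dedup xs) = fst ` set xs"
proof (induction xs rule: dedup.induct)
  case (2 x xs)
  have "fst ` set (filter (\<lambda>y. fst y \<noteq> fst x) xs) = fst ` set xs - {fst x}" by auto
  then show ?case using 2 by auto
qed simp

lemma I_op_empty:
  assumes "wf_tab Q" "attrs Q \<noteq> []"
  shows "I_op {} Q = Tab (attrs Q) (dedup (rows Q))"
proof -
  have "map (\<lambda>r. (map snd (filter (\<lambda>p. fst p \<notin> {}) (zip (attrs Q) (fst r))), snd r)) (rows Q) = rows Q"
    using assms(1) unfolding wf_tab_def by (intro map_idI) auto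
  then show ?thesis using assms(2) unfolding I_op_def At_def by simp
qed

lemma complete_tab_rows:
  assumes wf: "wf_tab Q" and c: "complete_tab Q"
  shows "fst ` set (rows Q) = {xs. length xs = length (attrs Q)}"
proof -
  let ?k = "length (attrs Q)"
  have "card (fst ` set (rows Q)) = length (rows Q)"
    using wf distinct_card[of "map fst (rows Q)"] unfolding wf_tab_def by simp
  also have "\<dots> = 2 ^ ?k"
    using c wf distinct_card[of "attrs Q"] unfolding complete_tab_def N_def wf_tab_def At_def by simp
  also have "\<dots> = card {xs :: bool list. length xs = ?k}"
    using card_lists_length_eq[of "UNIV :: bool set" ?k] by simp
  finally have "card (fst ` set (rows Q)) = card {xs :: bool list. length xs = ?k}" .
  moreover have "finite {xs :: bool list. length xs = ?k}"
    using finite_lists_length_eq[of "UNIV :: bool set" ?k] by simp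
  moreover have "fst ` set (rows Q) \<subseteq> {xs. length xs = ?k}" using wf unfolding wf_tab_def by auto
  ultimately show ?thesis using card_subset_eq by blast
qed

lemma Z_attained:
  assumes "Z T \<noteq> 0"
  obtains Q where "Q \<in> cl_tab T" "complete_tab Q" "Z T = card (At Q)"
proof -
  let ?C = "{card (At Q) | Q. Q \<in> cl_tab T \<and> complete_tab Q}"
  have ne: "?C \<noteq> {}" and Z: "Z T = Max ?C" using assms unfolding Z_def by (auto split: if_splits)
  have "?C \<subseteq> {..card (At T)}"
    using At_subset_of_cl_tab by (auto intro!: card_mono simp: At_def)
  then have "finite ?C" by (rule finite_subset) simp
  then have "Max ?C \<in> ?C" using ne by (rule Max_in)
  then show ?thesis using that Z by auto
qed

section \<open>The lower bound\<close>

lemma triangular_root: "\<exists>t::nat. t * (t + 1) \<le> 2 * k \<and> 2 * k < (t + 1) * (t + 2)"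
proof (induction k)
  case 0
  show ?case by (intro exI[of _ 0]) simp
next
  case (Suc k)
  then obtain t where t: "t * (t + 1) \<le> 2 * k" "2 * k < (t + 1) * (t + 2)" by blast
  show ?case
  proof (cases "2 * Suc k < (t + 1) * (t + 2)")
    case True
    then show ?thesis using t by (intro exI[of _ t]) simp
  next
    case False
    have "(t + 2) * (t + 3) = (t + 1) * (t + 2) + 2 * (t + 2)" by (simp add: algebra_simps)
    then show ?thesis using False t by (intro exI[of _ "t + 1"]) (simp add: algebra_simps)
  qed
qed

lemma sqrt_le_of_triangular: "2 * k < (t + 1) * (t + 2) \<Longrightarrow> sqrt (2 * real k) \<le> real t + 2"
proof (rule real_le_lsqrt)
  assume "2 * k < (t + 1) * (t + 2)"
  then have "2 * k \<le> (t + 2) * (t + 2)" using mult_le_mono[of "t + 1" "t + 2" "t + 2" "t + 2"] by simp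
  then have "real (2 * k) \<le> real ((t + 2) * (t + 2))" by (simp only: of_nat_le_iff)
  then show "2 * real k \<le> (real t + 2)\<^sup>2" by (simp add: power2_eq_square algebra_simps)
qed simp_all

lemma pyramid_table_of_complete:
  assumes wf: "wf_tab Q" and c: "complete_tab Q" and tk: "t * Suc t div 2 \<le> length (attrs Q)"
    and t: "1 \<le> t" and ne: "attrs Q \<noteq> []"
  shows "pyramid_table (J_op (falsified_clauses t) (I_op {} Q)) (attrs Q) (length (attrs Q)) t"
proof
  let ?T = "J_op (falsified_clauses t) (I_op {} Q)"
  show "attrs ?T = attrs Q" unfolding I_op_empty[OF wf ne] J_op_def by simp
  show "distinct (attrs Q)" using wf unfolding wf_tab_def by simp
  have "set (rows ?T) = (\<lambda>xs. (xs, falsified_clauses t xs)) ` fst ` set (dedup (rows Q))"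
    unfolding I_op_empty[OF wf ne] J_op_def by (simp add: image_image)
  then show "set (rows ?T) = (\<lambda>xs. (xs, falsified_clauses t xs)) ` {xs. length xs = length (attrs Q)}"
    unfolding fst_set_dedup complete_tab_rows[OF wf c] .
qed (use tk t in auto)

lemma complete_table_bound:
  assumes cc: "closed_class A" and bm: "bounded_measure \<psi>"
    and QA: "Q \<in> A" and c: "complete_tab Q" and k3: "3 \<le> card (At Q)"
    and qn: "\<forall>f\<in>At Q. \<psi> [f] \<le> n"
  obtains T where "T \<in> A" "psi_a \<psi> T \<le> 3 * n" "sqrt (2 * real (card (At Q))) - 3 \<le> real (psi_d \<psi> T)"
proof -
  have wf: "wf_tab Q" using cc QA unfolding closed_class_def M2_def by auto
  define k where "k = length (attrs Q)"
  have kc: "card (At Q) = k"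
    using wf distinct_card[of "attrs Q"] unfolding wf_tab_def At_def k_def by simp
  obtain t where t: "t * (t + 1) \<le> 2 * k" "2 * k < (t + 1) * (t + 2)" using triangular_root by blast
  have t2: "2 \<le> t"
  proof (rule ccontr)
    assume "\<not> 2 \<le> t"
    then have "(t + 1) * (t + 2) \<le> 2 * 3" using mult_le_mono[of "t + 1" 2 "t + 2" 3] by simp
    then show False using t(2) k3 kc by simp
  qed
  define T where "T = J_op (falsified_clauses t) (I_op {} Q)"
  have ne: "attrs Q \<noteq> []" using k3 kc k_def by auto
  interpret pyramid_table T "attrs Q" k t
    unfolding T_def k_def using pyramid_table_of_complete[OF wf c _ _ ne] t(1) t2 k_def by simp
  have "\<forall>xs. finite (falsified_clauses t xs) \<and> falsified_clauses t xs \<noteq> {}"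
    using finite_falsified_clauses falsified_clauses_nonempty t2 by simp
  then have "T \<in> cl_tab Q" unfolding cl_tab_def T_def by blast
  then have "T \<in> A" using closed_class_cl_tab[OF cc QA] by blast
  moreover have "psi_a \<psi> T \<le> 3 * n"
    using psi_a_le bm qn unfolding bounded_measure_def At_def by blast
  moreover have "sqrt (2 * real (card (At Q))) - 3 \<le> real (psi_d \<psi> T)"
    using sqrt_le_of_triangular[OF t(2)] psi_d_ge[OF bm t2] kc by simp
  ultimately show ?thesis using that by blast
qed

lemma sqrt_Z_le_psi_d:
  assumes cc: "closed_class A" and nt: "nontrivial A" and bm: "bounded_measure \<psi>"
    and T: "T \<in> A_psi \<psi> A n"
  obtains T' where "T' \<in> A" "psi_a \<psi> T' \<le> 3 * n" "sqrt (2 * real (Z T)) - 3 \<le> real (psi_d \<psi> T')"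
proof (cases "3 \<le> Z T")
  case False
  then have "sqrt (2 * real (Z T)) \<le> 3" by (intro real_le_lsqrt) auto
  then show ?thesis
    using that[of Lambda] Lambda_in_closed_class[OF cc nt] unfolding psi_a_def psi_d_def by simp
next
  case True
  have TA: "T \<in> A" and mT: "m_psi \<psi> T \<le> n" using T unfolding A_psi_def by auto
  obtain Q where Q: "Q \<in> cl_tab T" "complete_tab Q" "Z T = card (At Q)"
    using Z_attained True by (metis not_numeral_le_zero)
  have k3: "3 \<le> card (At Q)" using True Q(3) by simp
  have "\<psi> [f] \<le> n" if "f \<in> At Q" for f
  proof -
    have "f \<in> At T" using At_subset_of_cl_tab[OF Q(1)] that by blast
    then have "\<psi> [f] \<le> m_psi \<psi> T" unfolding m_psi_def by (auto simp: At_def)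
    then show ?thesis using mT by simp
  qed
  then obtain T' where "T' \<in> A" "psi_a \<psi> T' \<le> 3 * n"
    "sqrt (2 * real (card (At Q))) - 3 \<le> real (psi_d \<psi> T')"
    using complete_table_bound[OF cc bm closed_class_cl_tab[OF cc TA Q(1)] Q(2) k3] by blast
  then show ?thesis using that Q(3) by simp
qed

lemma psi_d_le_H_psiA:
  assumes "H_psiA \<psi> A m \<noteq> None" "T \<in> A" "psi_a \<psi> T \<le> m"
  shows "psi_d \<psi> T \<le> the (H_psiA \<psi> A m)"
proof -
  let ?S = "{psi_d \<psi> T | T. T \<in> A \<and> psi_a \<psi> T \<le> m}"
  have fin: "finite ?S" and H: "the (H_psiA \<psi> A m) = Max ?S"
    using assms(1) unfolding H_psiA_def Let_def by (simp_all split: if_splits)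
  show ?thesis unfolding H using assms(2,3) by (intro Max_ge[OF fin]) blast
qed

lemma le_square_of_sqrt_le: "sqrt (2 * real z) - 3 \<le> real m \<Longrightarrow> z \<le> (m + 3) ^ 2"
proof -
  assume "sqrt (2 * real z) - 3 \<le> real m"
  then have "2 * real z \<le> (real m + 3) ^ 2" by (intro sqrt_le_D) simp
  then have "real z \<le> real ((m + 3) ^ 2)" by simp
  then show ?thesis by (simp only: of_nat_le_iff)
qed

theorem lemma12:
  fixes A :: "tab set" and \<psi> :: "nat list \<Rightarrow> nat"
  assumes "closed_class A" and "nontrivial A" and "bounded_measure \<psi>"
    and "\<forall>n. H_psiA \<psi> A n \<noteq> None"
  shows "\<forall>n. Z_psiA \<psi> A n \<noteq> None \<and>
           real (the (H_psiA \<psi> A (3 * n))) \<ge> sqrt (2 * real (the (Z_psiA \<psi> A n))) - 3"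
proof
  fix n
  let ?H = "the (H_psiA \<psi> A (3 * n))"
  have bound: "sqrt (2 * real (Z T)) - 3 \<le> real ?H" if T: "T \<in> A_psi \<psi> A n" for T
  proof -
    obtain T' where "T' \<in> A" "psi_a \<psi> T' \<le> 3 * n" "sqrt (2 * real (Z T)) - 3 \<le> real (psi_d \<psi> T')"
      using sqrt_Z_le_psi_d[OF assms(1-3) T] .
    then show ?thesis using psi_d_le_H_psiA[of \<psi> A "3 * n" T'] assms(4) by fastforce
  qed
  have fin: "finite (Z ` A_psi \<psi> A n)"
    by (rule finite_subset[of _ "{..(?H + 3) ^ 2}"]) (auto dest: bound le_square_of_sqrt_le)
  have "Lambda \<in> A_psi \<psi> A n"
    using Lambda_in_closed_class[OF assms(1,2)] unfolding A_psi_def m_psi_def At_def Lambda_def by simp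
  then obtain T where T: "T \<in> A_psi \<psi> A n" "Max (Z ` A_psi \<psi> A n) = Z T"
    using Max_in[OF fin] by blast
  then show "Z_psiA \<psi> A n \<noteq> None \<and> real ?H \<ge> sqrt (2 * real (the (Z_psiA \<psi> A n))) - 3"
    using bound[OF T(1)] fin unfolding Z_psiA_def Let_def by simp
qed
end
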